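(* Let $G=(V,E)$ be a graph with edges ordered $e_1,\dots,e_m$ that has an $f$-MFD blocking set $\{(e_i,F_i)\}_{i=1}^m$. Then for every $S\subseteq V$, the induced subgraph $G[S]$, with its edges ordered as inherited from the ordering of $E$, has $$\Big\{\Big(e_i,\ (F_i\cap V\cap S)\cup\big(F_i\cap E\cap \tbinom{S}{2}\big)\Big)\Big\}_{e_i\in E(G[S])}$$ as an $f$-MFD blocking set.
   Context: For a graph $G=(V,E)$ and $F\subseteq V\cup E$, $G-F$ is obtained by deleting the vertices of $F\cap V$ (with incident edges) and the edges of $F\cap E$. $F$ damages an edge $e$ if $e$ is not an edge of $G-F$. For $v\in V$ let $\deg_G(v,F)=|\{u\in N_G(v): u\in F\text{ or }\{u,v\}\in F\}|$ and $\deg_G(F)=\max_{v\in V\setminus F}\deg_G(v,F)$. Given ordered edges $e_1,\dots,e_m$ with $e_i=\{u_i,v_i\}$, let $G_{<i}=(V,\{e_1,\dots,e_{i-1}\})$. A connectivity blocking set for $G$ is a collection $\{(e_i,F_i)\}_{i=1}^m$ with $F_i\subseteq V\cup E$ such that (1) $F_i$ does not damage $e_i$ and (2) $u_i,v_i$ are disconnected in $G_{<i}-F_i$. It is an $f$-MFD blocking set if moreover $\deg_G(F_i)\le f$ for all $i$. For the induced subgraph these notions are taken with respect to $G[S]$ and its inherited edge order. *)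

theory Defs
  imports Main
begin

text \<open>A set F \<subseteq> V \<union> E is represented as a pair (FV, FE) with FV \<subseteq> V the deleted
  vertices and FE \<subseteq> E the deleted edges.\<close>

type_synonym 'a fset_VE = "'a set \<times> 'a set set"

definition graph :: "'a set \<Rightarrow> 'a set list \<Rightarrow> bool" where
  "graph V es \<longleftrightarrow> finite V \<and> distinct es \<and> (\<forall>e\<in>set es. e \<subseteq> V \<and> card e = 2)"

definition in_VE :: "'a set \<Rightarrow> 'a set list \<Rightarrow> 'a fset_VE \<Rightarrow> bool" where
  "in_VE V es F \<longleftrightarrow> fst F \<subseteq> V \<and> snd F \<subseteq> set es"

definition edges_minus :: "'a set set \<Rightarrow> 'a fset_VE \<Rightarrow> 'a set set" where
  "edges_minus E F = {e \<in> E. e \<inter> fst F = {} \<and> e \<notin> snd F}"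

definition damages :: "'a set list \<Rightarrow> 'a fset_VE \<Rightarrow> 'a set \<Rightarrow> bool" where
  "damages es F e \<longleftrightarrow> e \<notin> edges_minus (set es) F"

definition nbrs :: "'a set list \<Rightarrow> 'a \<Rightarrow> 'a set" where
  "nbrs es v = {u. {u, v} \<in> set es}"

definition deg_v :: "'a set list \<Rightarrow> 'a \<Rightarrow> 'a fset_VE \<Rightarrow> nat" where
  "deg_v es v F = card {u \<in> nbrs es v. u \<in> fst F \<or> {u, v} \<in> snd F}"

text \<open>deg_G(F) = max over v \<in> V \ F of deg_G(v,F) (0 if V \ F is empty).\<close>
definition deg_F :: "'a set \<Rightarrow> 'a set list \<Rightarrow> 'a fset_VE \<Rightarrow> nat" where
  "deg_F V es F = Sup ((\<lambda>v. deg_v es v F) ` (V - fst F))"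

text \<open>u and v are connected in G_{<i} - F (graph on V - FV with edges e_1..e_{i-1}
  not damaged by F); i is 0-based here, so G_{<i} has edges take i es.\<close>
definition connected_in :: "'a set \<Rightarrow> 'a set set \<Rightarrow> 'a \<Rightarrow> 'a \<Rightarrow> bool" where
  "connected_in W E u v \<longleftrightarrow> u \<in> W \<and> v \<in> W \<and>
      (\<lambda>x y. {x, y} \<in> E)\<^sup>*\<^sup>* u v"

definition conn_blocking_set ::
  "'a set \<Rightarrow> 'a set list \<Rightarrow> ('a set \<times> 'a fset_VE) list \<Rightarrow> bool" where
  "conn_blocking_set V es bs \<longleftrightarrow> map fst bs = es \<and>
     (\<forall>i < length bs. let e = fst (bs ! i); F = snd (bs ! i) in
        in_VE V es F \<and> \<not> damages es F e \<and>
        (\<forall>u v. e = {u, v} \<longrightarrow>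
           \<not> connected_in (V - fst F) (edges_minus (set (take i es)) F) u v))"

definition mfd_blocking_set ::
  "nat \<Rightarrow> 'a set \<Rightarrow> 'a set list \<Rightarrow> ('a set \<times> 'a fset_VE) list \<Rightarrow> bool" where
  "mfd_blocking_set f V es bs \<longleftrightarrow> conn_blocking_set V es bs \<and>
     (\<forall>p \<in> set bs. deg_F V es (snd p) \<le> f)"

definition induced_edges :: "'a set \<Rightarrow> 'a set list \<Rightarrow> 'a set list" where
  "induced_edges S es = filter (\<lambda>e. e \<subseteq> S) es"

definition restrict_bs ::
  "'a set \<Rightarrow> 'a set list \<Rightarrow> 'a set \<Rightarrow> ('a set \<times> 'a fset_VE) list \<Rightarrow> ('a set \<times> 'a fset_VE) list" where
  "restrict_bs V es S bs =
     map (\<lambda>(e, F). (e, (fst F \<inter> V \<inter> S, snd F \<inter> set es \<inter> {x. x \<subseteq> S \<and> card x = 2})))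
       (filter (\<lambda>p. fst p \<subseteq> S) bs)"

end

theory Submission
  imports Defs
begin

text \<open>Write F_i' for the restriction of F_i to G[S]. It only drops deleted vertices
  and edges, so degrees can only decrease. If e_i is the j-th edge of G[S], then the
  edges of G[S]_{<j} are exactly the edges of G_{<i} inside S, and such an edge is
  damaged by F_i' iff it is damaged by F_i. Hence G[S]_{<j} - F_i' is a subgraph of
  G_{<i} - F_i, where the endpoints of e_i are disconnected.\<close>

lemma nth_filter_eq_nth_take:
  assumes "j < length (filter P xs)"
  obtains i where "i < length xs" "filter P xs ! j = xs ! i"
    "take j (filter P xs) = filter P (take i xs)"
  using assms
proof (induction xs arbitrary: j thesis)
  case Nil
  then show ?case by simp
next
  case (Cons x xs)
  show ?case
  proof (cases "P x \<and> j = 0")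
    case True
    then show ?thesis by (intro Cons.prems(1)[of 0]) auto
  next
    case False
    define k where "k = (if P x then j - 1 else j)"
    have "k < length (filter P xs)" using Cons.prems(2) False by (auto simp: k_def)
    then obtain i where "i < length xs" "filter P xs ! k = xs ! i"
      "take k (filter P xs) = filter P (take i xs)" using Cons.IH by blast
    then show ?thesis
      using False by (intro Cons.prems(1)[of "Suc i"]) (auto simp: k_def take_Cons')
  qed
qed

lemma connected_in_mono:
  assumes "connected_in W E u v" "W \<subseteq> W'" "E \<subseteq> E'"
  shows "connected_in W' E' u v"
proof -
  have "(\<lambda>x y. {x, y} \<in> E) \<le> (\<lambda>x y. {x, y} \<in> E')" using assms(3) by auto
  then show ?thesis using assms(1,2) rtranclp_mono unfolding connected_in_def by blast
qed

lemma finite_nbrs: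
  assumes "graph V es"
  shows "finite (nbrs es v)"
proof (rule finite_subset)
  show "nbrs es v \<subseteq> V" using assms by (auto simp: graph_def nbrs_def)
  show "finite V" using assms by (simp add: graph_def)
qed

lemma deg_v_mono:
  assumes "finite (nbrs es v)" "set es' \<subseteq> set es" "fst F' \<subseteq> fst F" "snd F' \<subseteq> snd F"
  shows "deg_v es' v F' \<le> deg_v es v F"
  unfolding deg_v_def by (rule card_mono) (use assms in \<open>auto simp: nbrs_def\<close>)

lemma deg_v_le_deg_F:
  assumes "finite V" "v \<in> V - fst F"
  shows "deg_v es v F \<le> deg_F V es F"
  unfolding deg_F_def using assms by (simp add: le_cSup_finite)

lemma deg_F_le_iff:
  assumes "finite V"
  shows "deg_F V es F \<le> k \<longleftrightarrow> (\<forall>v \<in> V - fst F. deg_v es v F \<le> k)"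
proof (cases "V - fst F = {}")
  case True
  then show ?thesis unfolding deg_F_def True by simp
next
  case False
  then show ?thesis using assms by (simp add: deg_F_def cSup_le_iff)
qed

definition restrict_F :: "'a set \<Rightarrow> 'a set list \<Rightarrow> 'a set \<Rightarrow> 'a fset_VE \<Rightarrow> 'a fset_VE" where
  "restrict_F V es S F = (fst F \<inter> V \<inter> S, snd F \<inter> set es \<inter> {x. x \<subseteq> S \<and> card x = 2})"

definition blocks :: "'a set \<Rightarrow> 'a set list \<Rightarrow> 'a set list \<Rightarrow> 'a set \<Rightarrow> 'a fset_VE \<Rightarrow> bool" where
  "blocks V es prefix e F \<longleftrightarrow> in_VE V es F \<and> \<not> damages es F e \<and>
     (\<forall>u v. e = {u, v} \<longrightarrow> \<not> connected_in (V - fst F) (edges_minus (set prefix) F) u v)"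

lemma conn_blocking_set_iff_blocks:
  "conn_blocking_set V es bs \<longleftrightarrow> map fst bs = es \<and>
     (\<forall>i < length bs. blocks V es (take i es) (fst (bs ! i)) (snd (bs ! i)))"
  unfolding conn_blocking_set_def blocks_def by (simp add: Let_def)

lemma restrict_bs_eq:
  "restrict_bs V es S bs = map (apsnd (restrict_F V es S)) (filter (\<lambda>p. fst p \<subseteq> S) bs)"
  unfolding restrict_bs_def restrict_F_def by (simp add: apsnd_def map_prod_def)

lemma map_fst_restrict_bs:
  assumes "map fst bs = es"
  shows "map fst (restrict_bs V es S bs) = induced_edges S es"
  using assms by (auto simp: restrict_bs_eq induced_edges_def filter_map comp_def)

lemma edges_minus_restrict_F_subset:
  assumes "graph V es" "set prefix \<subseteq> set es"
  shows "edges_minus (set (filter (\<lambda>e. e \<subseteq> S) prefix)) (restrict_F V es S F)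
           \<subseteq> edges_minus (set prefix) F"
proof
  fix x assume x: "x \<in> edges_minus (set (filter (\<lambda>e. e \<subseteq> S) prefix)) (restrict_F V es S F)"
  then have "x \<in> set es" using assms(2) by (auto simp: edges_minus_def)
  then have "x \<subseteq> V" "card x = 2" using assms(1) by (auto simp: graph_def)
  then show "x \<in> edges_minus (set prefix) F"
    using x \<open>x \<in> set es\<close> by (auto simp: edges_minus_def restrict_F_def)
qed

lemma damages_restrict_F:
  assumes "\<not> damages es F e" "e \<subseteq> S"
  shows "\<not> damages (induced_edges S es) (restrict_F V es S F) e"
  using assms unfolding damages_def edges_minus_def induced_edges_def restrict_F_def by auto

lemma blocks_restrict:
  assumes "graph V es" "S \<subseteq> V" "e \<subseteq> S" "set prefix \<subseteq> set es"
    and "blocks V es prefix e F"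
  shows "blocks S (induced_edges S es) (filter (\<lambda>e. e \<subseteq> S) prefix) e (restrict_F V es S F)"
  unfolding blocks_def
proof (intro conjI allI impI)
  show "in_VE S (induced_edges S es) (restrict_F V es S F)"
    by (auto simp: in_VE_def induced_edges_def restrict_F_def)
  show "\<not> damages (induced_edges S es) (restrict_F V es S F) e"
    using assms(5) by (intro damages_restrict_F[OF _ assms(3)]) (simp add: blocks_def)
  fix u v assume "e = {u, v}"
  show "\<not> connected_in (S - fst (restrict_F V es S F))
      (edges_minus (set (filter (\<lambda>e. e \<subseteq> S) prefix)) (restrict_F V es S F)) u v"
  proof
    assume "connected_in (S - fst (restrict_F V es S F))
      (edges_minus (set (filter (\<lambda>e. e \<subseteq> S) prefix)) (restrict_F V es S F)) u v"
    then have "connected_in (V - fst F) (edges_minus (set prefix) F) u v"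
    proof (rule connected_in_mono)
      show "S - fst (restrict_F V es S F) \<subseteq> V - fst F"
        using assms(2) by (auto simp: restrict_F_def)
    qed (rule edges_minus_restrict_F_subset[OF assms(1,4)])
    then show False using assms(5) \<open>e = {u, v}\<close> by (simp add: blocks_def)
  qed
qed

lemma conn_blocking_set_restrict:
  assumes "graph V es" "S \<subseteq> V" "conn_blocking_set V es bs"
  shows "conn_blocking_set S (induced_edges S es) (restrict_bs V es S bs)"
  unfolding conn_blocking_set_iff_blocks
proof (intro conjI allI impI)
  have es: "map fst bs = es" using assms(3) by (simp add: conn_blocking_set_def)
  then show "map fst (restrict_bs V es S bs) = induced_edges S es" by (rule map_fst_restrict_bs)
  let ?P = "\<lambda>p. fst p \<subseteq> S"
  fix j assume "j < length (restrict_bs V es S bs)"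
  then have j: "j < length (filter ?P bs)" by (simp add: restrict_bs_eq)
  then obtain i where i: "i < length bs" "filter ?P bs ! j = bs ! i"
    "take j (filter ?P bs) = filter ?P (take i bs)" by (rule nth_filter_eq_nth_take)
  have "fst (bs ! i) \<subseteq> S" using nth_mem[OF j] i(2) by simp
  moreover have "take j (induced_edges S es) = filter (\<lambda>e. e \<subseteq> S) (take i es)"
    using arg_cong[OF i(3), of "map fst"] unfolding es[symmetric] induced_edges_def
    by (simp add: filter_map comp_def take_map)
  moreover have "blocks V es (take i es) (fst (bs ! i)) (snd (bs ! i))"
    using assms(3) i(1) by (simp add: conn_blocking_set_iff_blocks)
  ultimately show "blocks S (induced_edges S es) (take j (induced_edges S es))
      (fst (restrict_bs V es S bs ! j)) (snd (restrict_bs V es S bs ! j))"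
    using blocks_restrict[OF assms(1,2)] i(2) j by (simp add: restrict_bs_eq set_take_subset)
qed

lemma deg_F_restrict_F_le:
  assumes "graph V es" "S \<subseteq> V"
  shows "deg_F S (induced_edges S es) (restrict_F V es S F) \<le> deg_F V es F"
proof -
  have "finite V" using assms(1) by (simp add: graph_def)
  then have "finite S" using assms(2) by (rule finite_subset[rotated])
  moreover have "deg_v (induced_edges S es) v (restrict_F V es S F) \<le> deg_F V es F"
    if "v \<in> S - fst (restrict_F V es S F)" for v
  proof -
    have "v \<in> V - fst F" using that assms(2) by (auto simp: restrict_F_def)
    have "deg_v (induced_edges S es) v (restrict_F V es S F) \<le> deg_v es v F"
      by (rule deg_v_mono[OF finite_nbrs[OF assms(1)]])
        (auto simp: induced_edges_def restrict_F_def)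
    also have "\<dots> \<le> deg_F V es F" by (rule deg_v_le_deg_F[OF \<open>finite V\<close> \<open>v \<in> V - fst F\<close>])
    finally show ?thesis .
  qed
  ultimately show ?thesis by (simp add: deg_F_le_iff)
qed

theorem mainTheorem3:
  fixes V S :: "'a set" and es :: "'a set list" and f :: nat
    and bs :: "('a set \<times> 'a fset_VE) list"
  assumes "graph V es"
    and "mfd_blocking_set f V es bs"
    and "S \<subseteq> V"
  shows "mfd_blocking_set f S (induced_edges S es) (restrict_bs V es S bs)"
  unfolding mfd_blocking_set_def
proof (intro conjI ballI)
  show "conn_blocking_set S (induced_edges S es) (restrict_bs V es S bs)"
    using assms by (intro conn_blocking_set_restrict) (simp_all add: mfd_blocking_set_def)
  fix p assume "p \<in> set (restrict_bs V es S bs)"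
  then obtain q where "q \<in> set bs" and p: "snd p = restrict_F V es S (snd q)"
    by (auto simp: restrict_bs_eq)
  have "deg_F S (induced_edges S es) (snd p) \<le> deg_F V es (snd q)"
    unfolding p by (rule deg_F_restrict_F_le[OF assms(1,3)])
  also have "\<dots> \<le> f" using assms(2) \<open>q \<in> set bs\<close> by (simp add: mfd_blocking_set_def)
  finally show "deg_F S (induced_edges S es) (snd p) \<le> f" .
qed

end
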